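(* Under the Markov-modulated setting, assume in addition that the chain is reversible, $\pi(x)P(x,y)=\pi(y)P(y,x)$ for all $x,y$. Let $1=\lambda_1\ge\lambda_2\ge\dots\ge\lambda_K>-1$ be the eigenvalues of $P$ ($K=|\mathcal{X}|$) with real eigenfunctions $f_1\equiv1,f_2,\dots,f_K$ forming an orthonormal basis with respect to $\langle f,g\rangle_\pi=\sum_{x}\pi(x)f(x)g(x)$, and let $\lambda_*=\max\{|\lambda_j|:2\le j\le K\}$. Define $$R=\sum_{z\in\mathcal{Z}:\,\sum_y\pi(y)r_y(z)>0}\frac{\sum_{y\in\mathcal{X}}\pi(y)r_y(z)^2}{\sum_{y\in\mathcal{X}}\pi(y)r_y(z)}.$$ Then $1\le R\le K$, and for every $x\in\mathcal{X}$, $n\ge0$, $L\ge0$, $$D_n(L)\le\frac12\Big(\sum_{j=2}^K\lambda_j^{2L}f_j(x)^2\Big)^{1/2}\sqrt2\,(R-1)^{1/2},$$ and consequently $$D_n(L)\le\frac12\lambda_*^L\Big(\frac1{\pi(x)}-1\Big)^{1/2}\sqrt2\,(R-1)^{1/2}.$$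
   Context: Markov-modulated setting: $(X_n)_{n\ge0}$ is a discrete-time, time-homogeneous Markov chain on a finite state space $\mathcal{X}$ with transition matrix $P$ ($P^L$ its $L$-th power), irreducible and aperiodic with stationary distribution $\pi$, started in stationarity ($X_0\sim\pi$). $(Z_n)_{n\ge0}$ take values in a countable set $\mathcal{Z}$ with $\Pr(Z_n=z\mid X_0,\dots,X_n,Z_0,\dots,Z_{n-1})=r_{X_n}(z)$ for a fixed family of pmfs $(r_y)_{y\in\mathcal{X}}$. $\|p-q\|_{TV}=\frac12\sum_z|p(z)-q(z)|$. Predictability given perfect observation $X_n=x$: $D_n(L)=\|\Pr(Z_{n+L}\in\cdot\mid X_n=x)-\Pr(Z_{n+L}\in\cdot)\|_{TV}$. *)

theory Defs
  imports "HOL-Probability.Probability"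
begin

fun mpow :: "('x::finite \<Rightarrow> 'x \<Rightarrow> real) \<Rightarrow> nat \<Rightarrow> 'x \<Rightarrow> 'x \<Rightarrow> real" where
  "mpow P 0 = (\<lambda>x y. if x = y then 1 else 0)"
| "mpow P (Suc n) = (\<lambda>x y. \<Sum>w\<in>UNIV. mpow P n x w * P w y)"

definition stochastic :: "('x::finite \<Rightarrow> 'x \<Rightarrow> real) \<Rightarrow> bool" where
  "stochastic P \<longleftrightarrow> (\<forall>x y. P x y \<ge> 0) \<and> (\<forall>x. (\<Sum>y\<in>UNIV. P x y) = 1)"

definition irreducible :: "('x::finite \<Rightarrow> 'x \<Rightarrow> real) \<Rightarrow> bool" where
  "irreducible P \<longleftrightarrow> (\<forall>x y. \<exists>n. mpow P n x y > 0)"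

definition aperiodic :: "('x::finite \<Rightarrow> 'x \<Rightarrow> real) \<Rightarrow> bool" where
  "aperiodic P \<longleftrightarrow> (\<forall>x. Gcd {n. n \<ge> 1 \<and> mpow P n x x > 0} = 1)"

definition stationary :: "('x::finite \<Rightarrow> 'x \<Rightarrow> real) \<Rightarrow> ('x \<Rightarrow> real) \<Rightarrow> bool" where
  "stationary P \<pi> \<longleftrightarrow> (\<forall>x. \<pi> x \<ge> 0) \<and> (\<Sum>x\<in>UNIV. \<pi> x) = 1
     \<and> (\<forall>y. \<pi> y = (\<Sum>x\<in>UNIV. \<pi> x * P x y))"

definition reversible :: "('x::finite \<Rightarrow> 'x \<Rightarrow> real) \<Rightarrow> ('x \<Rightarrow> real) \<Rightarrow> bool" where
  "reversible P \<pi> \<longleftrightarrow> (\<forall>x y. \<pi> x * P x y = \<pi> y * P y x)"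

text \<open>Markov-modulated process on a probability space M: X is a Markov chain with
  transition matrix P started in pi; Z n given X_0..X_n, Z_0..Z_{n-1} has law r (X n).\<close>
definition markov_modulated ::
  "'a measure \<Rightarrow> ('x::finite \<Rightarrow> 'x \<Rightarrow> real) \<Rightarrow> ('x \<Rightarrow> real) \<Rightarrow> ('x \<Rightarrow> 'z::countable pmf)
     \<Rightarrow> (nat \<Rightarrow> 'a \<Rightarrow> 'x) \<Rightarrow> (nat \<Rightarrow> 'a \<Rightarrow> 'z) \<Rightarrow> bool" where
  "markov_modulated M P \<pi> r X Z \<longleftrightarrow>
     prob_space M
   \<and> (\<forall>n. X n \<in> measurable M (count_space UNIV))
   \<and> (\<forall>n. Z n \<in> measurable M (count_space UNIV))
   \<and> (\<forall>x. measure M {\<omega>\<in>space M. X 0 \<omega> = x} = \<pi> x)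
   \<and> (\<forall>n (xs::nat \<Rightarrow> 'x).
        measure M {\<omega>\<in>space M. \<forall>i\<le>Suc n. X i \<omega> = xs i}
        = measure M {\<omega>\<in>space M. \<forall>i\<le>n. X i \<omega> = xs i} * P (xs n) (xs (Suc n)))
   \<and> (\<forall>n (xs::nat \<Rightarrow> 'x) (zs::nat \<Rightarrow> 'z) z.
        measure M {\<omega>\<in>space M. (\<forall>i\<le>n. X i \<omega> = xs i) \<and> (\<forall>i<n. Z i \<omega> = zs i) \<and> Z n \<omega> = z}
        = measure M {\<omega>\<in>space M. (\<forall>i\<le>n. X i \<omega> = xs i) \<and> (\<forall>i<n. Z i \<omega> = zs i)}
          * pmf (r (xs n)) z)"

text \<open>D_n(L) at state x: total variation distance between the conditional law of
  Z_{n+L} given X_n = x and the law of Z_{n+L}.\<close>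
definition predictability ::
  "'a measure \<Rightarrow> (nat \<Rightarrow> 'a \<Rightarrow> 'x) \<Rightarrow> (nat \<Rightarrow> 'a \<Rightarrow> 'z) \<Rightarrow> nat \<Rightarrow> nat \<Rightarrow> 'x \<Rightarrow> real" where
  "predictability M X Z n L x =
     (1/2) * (\<Sum>\<^sub>\<infinity>z\<in>UNIV.
        \<bar>measure M {\<omega>\<in>space M. X n \<omega> = x \<and> Z (n+L) \<omega> = z} / measure M {\<omega>\<in>space M. X n \<omega> = x}
         - measure M {\<omega>\<in>space M. Z (n+L) \<omega> = z}\<bar>)"

end

theory Submission
  imports Defs
begin

text \<open>By the spectral decomposition, \<open>P\<^sup>L x y = \<pi> y (1 + h y)\<close> with
  \<open>h y = (\<Sum>j\<ge>2. \<lambda>\<^sub>j\<^sup>L f\<^sub>j x f\<^sub>j y)\<close>, and in stationarity \<open>Z\<^sub>n\<^sub>+\<^sub>L\<close> has the mixture law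
  \<open>q = (\<Sum>y. \<pi> y r\<^sub>y)\<close>; so the conditional law given \<open>X\<^sub>n = x\<close> differs from \<open>q\<close> by
  \<open>z \<mapsto> (\<Sum>y. \<pi> y h y r\<^sub>y z)\<close>. As \<open>h\<close> has \<open>\<pi>\<close>-mean zero, \<open>r\<^sub>y z\<close> may be replaced by
  \<open>r\<^sub>y z - q z\<close>, and Cauchy-Schwarz in \<open>L\<^sup>2(\<pi>)\<close> bounds the difference by
  \<open>\<parallel>h\<parallel> (A z - q z\<^sup>2)\<^sup>1\<^sup>/\<^sup>2\<close>, where \<open>A z = (\<Sum>y. \<pi> y r\<^sub>y z\<^sup>2)\<close>. Writing
  \<open>A - q\<^sup>2 = q (A/q - q)\<close> and applying Cauchy-Schwarz once more, now to the sum over \<open>z\<close>,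
  gives \<open>\<parallel>h\<parallel> (R - 1)\<^sup>1\<^sup>/\<^sup>2\<close>. By orthonormality \<open>\<parallel>h\<parallel>\<^sup>2 = (\<Sum>j\<ge>2. \<lambda>\<^sub>j\<^sup>2\<^sup>L f\<^sub>j x\<^sup>2)\<close>, and the
  case \<open>L = 0\<close>, \<open>y = x\<close> of the decomposition gives \<open>(\<Sum>j\<ge>2. f\<^sub>j x\<^sup>2) = 1/\<pi> x - 1\<close>.\<close>

section \<open>Infinite sums\<close>

lemma has_sum_sum:
  fixes f :: "'i \<Rightarrow> 'z \<Rightarrow> real"
  assumes "finite I" "\<And>i. i \<in> I \<Longrightarrow> (f i has_sum s i) A"
  shows "((\<lambda>z. \<Sum>i\<in>I. f i z) has_sum (\<Sum>i\<in>I. s i)) A"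
  using assms by (induction I rule: finite_induct) (auto intro: has_sum_add)

lemma has_sum_pmf: "(pmf p has_sum 1) UNIV"
proof -
  have "pmf p summable_on UNIV"
    using summable_on_iff_abs_summable_on_real abs_summable_equivalent pmf_abs_summable by blast
  moreover have "infsum (pmf p) UNIV = 1"
    using infsetsum_infsum[OF pmf_abs_summable, of p UNIV] infsetsum_pmf_eq_1[of p UNIV] by simp
  ultimately show ?thesis by (metis has_sum_infsum)
qed

lemma sum_sqrt_mult_le:
  fixes a b :: "'z \<Rightarrow> real"
  assumes a0: "\<And>z. z \<in> F \<Longrightarrow> a z \<ge> 0" and b0: "\<And>z. z \<in> F \<Longrightarrow> b z \<ge> 0"
  shows "(\<Sum>z\<in>F. sqrt (a z * b z)) \<le> sqrt (sum a F) * sqrt (sum b F)"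
proof -
  have sa: "sum a F \<ge> 0" and sb: "sum b F \<ge> 0"
    using a0 b0 by (auto intro: sum_nonneg)
  have "(\<Sum>z\<in>F. sqrt (a z * b z))\<^sup>2 = (\<Sum>z\<in>F. sqrt (a z) * sqrt (b z))\<^sup>2"
    by (simp add: real_sqrt_mult)
  also have "\<dots> \<le> (\<Sum>z\<in>F. (sqrt (a z))\<^sup>2) * (\<Sum>z\<in>F. (sqrt (b z))\<^sup>2)"
    by (rule Cauchy_Schwarz_ineq_sum)
  also have "\<dots> = sum a F * sum b F"
    using a0 b0 by (intro arg_cong2[where f = "(*)"] sum.cong) auto
  also have "\<dots> = (sqrt (sum a F) * sqrt (sum b F))\<^sup>2"
    using sa sb by (simp add: power_mult_distrib)
  finally show ?thesis
    by (rule power2_le_imp_le) (simp add: sa sb)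
qed

lemma infsum_sqrt_mult_le:
  fixes a b :: "'z \<Rightarrow> real"
  assumes a: "(a has_sum SA) S" and b: "(b has_sum SB) S"
    and a0: "\<And>z. z \<in> S \<Longrightarrow> a z \<ge> 0" and b0: "\<And>z. z \<in> S \<Longrightarrow> b z \<ge> 0"
  shows "(\<lambda>z. sqrt (a z * b z)) summable_on S"
    and "(\<Sum>\<^sub>\<infinity>z\<in>S. sqrt (a z * b z)) \<le> sqrt SA * sqrt SB"
proof -
  have finite_le: "(\<Sum>z\<in>F. sqrt (a z * b z)) \<le> sqrt SA * sqrt SB" if "finite F" "F \<subseteq> S" for F
  proof -
    have "sum a F \<le> SA" "sum b F \<le> SB"
      using that a b a0 b0 by (auto intro: finite_sum_le_has_sum)
    moreover have "sum a F \<ge> 0" "sum b F \<ge> 0"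
      using that a0 b0 by (auto intro: sum_nonneg)
    ultimately have "sqrt (sum a F) * sqrt (sum b F) \<le> sqrt SA * sqrt SB"
      by (intro mult_mono) auto
    moreover have "(\<Sum>z\<in>F. sqrt (a z * b z)) \<le> sqrt (sum a F) * sqrt (sum b F)"
      using that a0 b0 by (intro sum_sqrt_mult_le) auto
    ultimately show ?thesis by linarith
  qed
  show summable: "(\<lambda>z. sqrt (a z * b z)) summable_on S"
  proof (rule nonneg_bdd_above_summable_on)
    show "bdd_above ((\<lambda>F. \<Sum>z\<in>F. sqrt (a z * b z)) ` {F. F \<subseteq> S \<and> finite F})"
      using finite_le by (intro bdd_aboveI2) auto
  qed (use a0 b0 in auto)
  show "(\<Sum>\<^sub>\<infinity>z\<in>S. sqrt (a z * b z)) \<le> sqrt SA * sqrt SB"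
    using summable finite_le by (rule infsum_le_finite_sums)
qed

section \<open>Mixtures of the observation laws\<close>

definition mixture_mass :: "('x::finite \<Rightarrow> real) \<Rightarrow> ('x \<Rightarrow> 'z pmf) \<Rightarrow> 'z \<Rightarrow> real" where
  "mixture_mass \<pi> r z = (\<Sum>y\<in>UNIV. \<pi> y * pmf (r y) z)"

definition mixture_second_moment :: "('x::finite \<Rightarrow> real) \<Rightarrow> ('x \<Rightarrow> 'z pmf) \<Rightarrow> 'z \<Rightarrow> real" where
  "mixture_second_moment \<pi> r z = (\<Sum>y\<in>UNIV. \<pi> y * (pmf (r y) z)\<^sup>2)"

text \<open>\<open>chi2_ratio \<pi> r - 1\<close> is the \<open>\<chi>\<^sup>2\<close>-divergence between the joint law of a state
  \<open>Y \<sim> \<pi>\<close> and an observation drawn from \<open>r Y\<close>, and the product of their marginals.\<close>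
definition chi2_ratio :: "('x::finite \<Rightarrow> real) \<Rightarrow> ('x \<Rightarrow> 'z pmf) \<Rightarrow> real" where
  "chi2_ratio \<pi> r = (\<Sum>\<^sub>\<infinity>z\<in>{z. mixture_mass \<pi> r z > 0}. mixture_second_moment \<pi> r z / mixture_mass \<pi> r z)"

lemma has_sum_sum_pmf:
  fixes r :: "'x::finite \<Rightarrow> 'z pmf"
  shows "((\<lambda>z. \<Sum>y\<in>UNIV. pmf (r y) z) has_sum real CARD('x)) UNIV"
  using has_sum_sum[where I = UNIV and f = "\<lambda>y. pmf (r y)" and s = "\<lambda>_. 1" and A = UNIV]
  by (simp add: has_sum_pmf)

context
  fixes \<pi> :: "'x::finite \<Rightarrow> real" and r :: "'x \<Rightarrow> 'z pmf"
  assumes \<pi>_pos: "\<And>y. \<pi> y > 0" and \<pi>_sum: "(\<Sum>y\<in>UNIV. \<pi> y) = 1"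
begin

private abbreviation (input) q where "q \<equiv> mixture_mass \<pi> r"
private abbreviation (input) A where "A \<equiv> mixture_second_moment \<pi> r"

lemma mixture_mass_nonneg: "q z \<ge> 0"
  unfolding mixture_mass_def by (intro sum_nonneg mult_nonneg_nonneg less_imp_le[OF \<pi>_pos] pmf_nonneg)

lemma has_sum_mixture_mass: "(q has_sum 1) UNIV"
proof -
  have "((\<lambda>z. \<Sum>y\<in>UNIV. \<pi> y * pmf (r y) z) has_sum (\<Sum>y\<in>UNIV. \<pi> y)) UNIV"
    using has_sum_cmult_right[OF has_sum_pmf] by (intro has_sum_sum) fastforce+
  then show ?thesis
    unfolding mixture_mass_def \<pi>_sum .
qed

lemma mixture_second_moment_minus_sq: "A z - (q z)\<^sup>2 = (\<Sum>y\<in>UNIV. \<pi> y * (pmf (r y) z - q z)\<^sup>2)"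
proof -
  have "(\<Sum>y\<in>UNIV. \<pi> y * (pmf (r y) z - q z)\<^sup>2)
      = A z - 2 * q z * (\<Sum>y\<in>UNIV. \<pi> y * pmf (r y) z) + (q z)\<^sup>2 * (\<Sum>y\<in>UNIV. \<pi> y)"
    unfolding mixture_second_moment_def
    by (simp add: power2_eq_square algebra_simps sum.distrib sum_subtractf sum_distrib_left sum_distrib_right)
  then show ?thesis
    using \<pi>_sum by (simp add: mixture_mass_def power2_eq_square)
qed

lemma mixture_second_moment_le: "A z \<le> q z * (\<Sum>y\<in>UNIV. pmf (r y) z)"
proof -
  have "A z \<le> (\<Sum>y\<in>UNIV. \<pi> y * pmf (r y) z * (\<Sum>y'\<in>UNIV. pmf (r y') z))"
    unfolding mixture_second_moment_def power2_eq_square mult.assoc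
    using \<pi>_pos by (intro sum_mono mult_left_mono member_le_sum) (auto simp: less_imp_le)
  then show ?thesis
    by (simp add: mixture_mass_def sum_distrib_right)
qed

lemma mixture_mass_le_ratio: "q z \<le> A z / q z"
proof (cases "q z = 0")
  case False
  then have "q z > 0" using mixture_mass_nonneg[of z] by simp
  moreover have "A z - (q z)\<^sup>2 \<ge> 0"
    unfolding mixture_second_moment_minus_sq
    by (intro sum_nonneg mult_nonneg_nonneg less_imp_le[OF \<pi>_pos] zero_le_power2)
  ultimately show ?thesis by (simp add: le_divide_eq power2_eq_square)
qed simp

lemma mixture_ratio_le_sum_pmf: "A z / q z \<le> (\<Sum>y\<in>UNIV. pmf (r y) z)"
proof (cases "q z = 0")
  case False
  then have "q z > 0" using mixture_mass_nonneg[of z] by simp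
  then show ?thesis
    using mixture_second_moment_le[of z] by (simp add: divide_le_eq mult.commute)
qed (simp add: sum_nonneg)

text \<open>Off the support of \<open>q\<close> also \<open>A\<close> vanishes, so the junk value \<open>0 / 0 = 0\<close> lets the sum
  range over all observations.\<close>
lemma has_sum_chi2_ratio: "((\<lambda>z. A z / q z) has_sum chi2_ratio \<pi> r) UNIV"
proof -
  have nonneg: "A z / q z \<ge> 0" for z
    using mixture_mass_nonneg mixture_mass_le_ratio order_trans by blast
  have "(\<lambda>z. A z / q z) summable_on UNIV"
    using has_sum_sum_pmf nonneg mixture_ratio_le_sum_pmf
    by (intro summable_on_comparison_test[OF has_sum_imp_summable]) auto
  moreover have "chi2_ratio \<pi> r = (\<Sum>\<^sub>\<infinity>z. A z / q z)"
    unfolding chi2_ratio_def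
    by (rule infsum_cong_neutral) (use mixture_mass_nonneg in \<open>auto simp: less_le\<close>)
  ultimately show ?thesis by simp
qed

lemma one_le_chi2_ratio: "1 \<le> chi2_ratio \<pi> r"
  using has_sum_mono[OF has_sum_mixture_mass has_sum_chi2_ratio] mixture_mass_le_ratio by blast

lemma chi2_ratio_le_card: "chi2_ratio \<pi> r \<le> CARD('x)"
  using has_sum_mono[OF has_sum_chi2_ratio has_sum_sum_pmf] mixture_ratio_le_sum_pmf by blast

text \<open>Since \<open>h\<close> has mean zero, \<open>r y z\<close> may be centered at \<open>q z\<close> before applying Cauchy-Schwarz.\<close>
lemma abs_centered_mixture_le:
  assumes h_mean: "(\<Sum>y\<in>UNIV. \<pi> y * h y) = 0"
  shows "\<bar>\<Sum>y\<in>UNIV. \<pi> y * h y * pmf (r y) z\<bar>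
    \<le> sqrt (\<Sum>y\<in>UNIV. \<pi> y * (h y)\<^sup>2) * sqrt (q z * (A z / q z - q z))"
proof -
  have sqrt_\<pi>: "sqrt (\<pi> y) * a * (sqrt (\<pi> y) * b) = \<pi> y * a * b" for y a b
    using \<pi>_pos[of y] by (simp add: algebra_simps flip: power2_eq_square)
  have "(\<Sum>y\<in>UNIV. \<pi> y * h y * pmf (r y) z) = (\<Sum>y\<in>UNIV. \<pi> y * h y * (pmf (r y) z - q z))"
  proof -
    have "(\<Sum>y\<in>UNIV. \<pi> y * h y * q z) = 0"
      using h_mean by (simp flip: sum_distrib_right)
    then show ?thesis by (simp add: right_diff_distrib sum_subtractf)
  qed
  also have "\<dots> = (\<Sum>y\<in>UNIV. (sqrt (\<pi> y) * h y) * (sqrt (\<pi> y) * (pmf (r y) z - q z)))"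
    by (simp add: sqrt_\<pi>)
  finally have "(\<Sum>y\<in>UNIV. \<pi> y * h y * pmf (r y) z)\<^sup>2
      \<le> (\<Sum>y\<in>UNIV. (sqrt (\<pi> y) * h y)\<^sup>2) * (\<Sum>y\<in>UNIV. (sqrt (\<pi> y) * (pmf (r y) z - q z))\<^sup>2)"
    by (simp only: Cauchy_Schwarz_ineq_sum)
  also have "\<dots> = (\<Sum>y\<in>UNIV. \<pi> y * (h y)\<^sup>2) * (A z - (q z)\<^sup>2)"
    using \<pi>_pos by (simp add: mixture_second_moment_minus_sq power_mult_distrib less_imp_le)
  also have "A z - (q z)\<^sup>2 = q z * (A z / q z - q z)"
  proof (cases "q z = 0")
    case True
    have "A z \<ge> 0"
      unfolding mixture_second_moment_def
      by (intro sum_nonneg mult_nonneg_nonneg less_imp_le[OF \<pi>_pos] zero_le_power2)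
    then have "A z = 0"
      using mixture_second_moment_le[of z] True by simp
    with True show ?thesis by simp
  qed (simp add: field_simps power2_eq_square)
  finally show ?thesis
    by (subst real_sqrt_abs[symmetric], subst real_sqrt_mult[symmetric]) (rule real_sqrt_le_mono)
qed

lemma infsum_abs_centered_mixture_le:
  assumes h_mean: "(\<Sum>y\<in>UNIV. \<pi> y * h y) = 0"
  shows "(\<Sum>\<^sub>\<infinity>z. \<bar>\<Sum>y\<in>UNIV. \<pi> y * h y * pmf (r y) z\<bar>)
    \<le> sqrt (\<Sum>y\<in>UNIV. \<pi> y * (h y)\<^sup>2) * sqrt (chi2_ratio \<pi> r - 1)"
proof -
  let ?H = "sqrt (\<Sum>y\<in>UNIV. \<pi> y * (h y)\<^sup>2)"
  let ?s = "\<lambda>z. sqrt (q z * (A z / q z - q z))"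
  have excess: "((\<lambda>z. A z / q z - q z) has_sum chi2_ratio \<pi> r - 1) UNIV"
    using has_sum_add[OF has_sum_chi2_ratio has_sum_uminusI[OF has_sum_mixture_mass]] by simp
  have excess_nonneg: "A z / q z - q z \<ge> 0" for z
    using mixture_mass_le_ratio[of z] by simp
  note cauchy_schwarz = infsum_sqrt_mult_le[OF has_sum_mixture_mass excess mixture_mass_nonneg excess_nonneg]
  have s_summable: "?s summable_on UNIV"
    by (fact cauchy_schwarz(1))
  have s_le: "(\<Sum>\<^sub>\<infinity>z. ?s z) \<le> sqrt (chi2_ratio \<pi> r - 1)"
    using cauchy_schwarz(2) by simp
  have bound: "\<bar>\<Sum>y\<in>UNIV. \<pi> y * h y * pmf (r y) z\<bar> \<le> ?H * ?s z" for z
    by (rule abs_centered_mixture_le[OF h_mean])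
  have bound_summable: "(\<lambda>z. ?H * ?s z) summable_on UNIV"
    using s_summable by (rule summable_on_cmult_right)
  have "(\<lambda>z. \<bar>\<Sum>y\<in>UNIV. \<pi> y * h y * pmf (r y) z\<bar>) summable_on UNIV"
    by (rule summable_on_comparison_test[OF bound_summable bound]) simp
  then have "(\<Sum>\<^sub>\<infinity>z. \<bar>\<Sum>y\<in>UNIV. \<pi> y * h y * pmf (r y) z\<bar>) \<le> (\<Sum>\<^sub>\<infinity>z. ?H * ?s z)"
    using bound_summable bound by (rule infsum_mono)
  also have "\<dots> \<le> ?H * sqrt (chi2_ratio \<pi> r - 1)"
    using s_le by (simp add: infsum_cmult_right' mult_left_mono sum_nonneg less_imp_le[OF \<pi>_pos])
  finally show ?thesis .
qed

end

section \<open>Spectral decomposition of the transition powers\<close>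

lemma orthonormal_family_expansion:
  fixes v :: "'j \<Rightarrow> real^'n"
  assumes card: "card J = CARD('n)"
    and orthonormal: "\<And>i j. i \<in> J \<Longrightarrow> j \<in> J \<Longrightarrow> v i \<bullet> v j = (if i = j then 1 else 0)"
  shows "w = (\<Sum>j\<in>J. (w \<bullet> v j) *\<^sub>R v j)"
proof -
  have finite: "finite J"
    using card by (metis card_ge_0_finite finite_UNIV zero_less_card_finite)
  have inj: "inj_on v J"
    by (rule inj_onI) (metis orthonormal zero_neq_one)
  define S where "S = v ` J"
  have "independent S"
  proof (rule pairwise_orthogonal_independent)
    show "pairwise orthogonal S"
      unfolding S_def pairwise_def orthogonal_def using orthonormal by (auto simp: image_iff)
    show "0 \<notin> S"
      unfolding S_def using orthonormal by force
  qed
  moreover have "card S = dim (UNIV :: (real^'n) set)"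
    unfolding S_def using card_image[OF inj] card by (simp add: dim_UNIV)
  ultimately have "UNIV \<subseteq> span S"
    using card_eq_dim[of S UNIV] finite unfolding S_def by auto
  then obtain u where "(\<Sum>b\<in>S. u b *\<^sub>R b) = w"
    using span_finite[of S] finite unfolding S_def
    by (metis (no_types, lifting) UNIV_I finite_imageI image_iff subsetD)
  then have u: "(\<Sum>j\<in>J. u (v j) *\<^sub>R v j) = w"
    unfolding S_def by (simp add: sum.reindex[OF inj])
  have "w \<bullet> v j = u (v j)" if "j \<in> J" for j
  proof -
    have "w \<bullet> v j = (\<Sum>i\<in>J. u (v i) * (v i \<bullet> v j))"
      unfolding u[symmetric] by (simp add: inner_sum_left)
    also have "\<dots> = (\<Sum>i\<in>J. if i = j then u (v j) else 0)"
      using that by (intro sum.cong refl) (simp add: orthonormal)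
    also have "\<dots> = u (v j)"
      using that finite by simp
    finally show ?thesis .
  qed
  then show ?thesis
    using u by (metis (no_types, lifting) sum.cong)
qed

text \<open>Rescaled by \<open>sqrt \<pi>\<close>, the \<open>f j\<close> become orthonormal vectors of \<open>real^'x\<close>.\<close>
lemma orthonormal_expansion:
  fixes \<pi> :: "'x::finite \<Rightarrow> real" and f :: "'j \<Rightarrow> 'x \<Rightarrow> real"
  assumes pos: "\<And>x. \<pi> x > 0" and card: "card J = CARD('x)"
    and orthonormal: "\<And>i j. i \<in> J \<Longrightarrow> j \<in> J \<Longrightarrow>
          (\<Sum>x\<in>UNIV. \<pi> x * f i x * f j x) = (if i = j then 1 else 0)"
  shows "g y = (\<Sum>j\<in>J. (\<Sum>y'\<in>UNIV. \<pi> y' * g y' * f j y') * f j y)"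
proof -
  define v :: "'j \<Rightarrow> real^'x" where "v j = (\<chi> y. sqrt (\<pi> y) * f j y)" for j
  define w :: "real^'x" where "w = (\<chi> y. sqrt (\<pi> y) * g y)"
  have sqrt_\<pi>: "sqrt (\<pi> y) * a * (sqrt (\<pi> y) * b) = \<pi> y * a * b" for y a b
    using pos[of y] by (simp add: algebra_simps flip: power2_eq_square)
  have "v i \<bullet> v j = (if i = j then 1 else 0)" if "i \<in> J" "j \<in> J" for i j
    using orthonormal[OF that] unfolding v_def inner_vec_def by (simp add: sqrt_\<pi>)
  then have expansion: "w = (\<Sum>j\<in>J. (w \<bullet> v j) *\<^sub>R v j)"
    using card by (intro orthonormal_family_expansion)
  have "w $ y = (\<Sum>j\<in>J. (w \<bullet> v j) * (v j $ y))"
    using arg_cong[where f = "\<lambda>t. t $ y", OF expansion] by simp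
  moreover have "w \<bullet> v j = (\<Sum>y'\<in>UNIV. \<pi> y' * g y' * f j y')" for j
    unfolding v_def w_def inner_vec_def by (simp add: sqrt_\<pi>)
  ultimately have "sqrt (\<pi> y) * g y = sqrt (\<pi> y) * (\<Sum>j\<in>J. (\<Sum>y'\<in>UNIV. \<pi> y' * g y' * f j y') * f j y)"
    unfolding v_def w_def by (simp add: sum_distrib_left algebra_simps)
  then show ?thesis
    using pos[of y] by simp
qed

lemma sum_sq_orthonormal:
  fixes \<pi> :: "'x::finite \<Rightarrow> real"
  assumes "finite J"
    and orthonormal: "\<And>i j. i \<in> J \<Longrightarrow> j \<in> J \<Longrightarrow>
          (\<Sum>x\<in>UNIV. \<pi> x * f i x * f j x) = (if i = j then 1 else 0)"
  shows "(\<Sum>x\<in>UNIV. \<pi> x * (\<Sum>j\<in>J. c j * f j x)\<^sup>2) = (\<Sum>j\<in>J. (c j)\<^sup>2)"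
proof -
  have "(\<Sum>x\<in>UNIV. \<pi> x * (\<Sum>j\<in>J. c j * f j x)\<^sup>2)
      = (\<Sum>i\<in>J. \<Sum>j\<in>J. c i * c j * (\<Sum>x\<in>UNIV. \<pi> x * f i x * f j x))"
    by (simp add: power2_eq_square sum_product sum_distrib_left mult_ac) (subst sum.swap, simp add: sum.swap[of _ J UNIV])
  also have "\<dots> = (\<Sum>i\<in>J. \<Sum>j\<in>J. if i = j then c i * c j else 0)"
    using orthonormal by (intro sum.cong refl) simp
  also have "\<dots> = (\<Sum>j\<in>J. (c j)\<^sup>2)"
    using assms(1) by (simp add: power2_eq_square)
  finally show ?thesis .
qed

lemma mpow_nonneg: "stochastic P \<Longrightarrow> mpow P n x y \<ge> 0"
  by (induction n arbitrary: y) (auto simp: stochastic_def intro!: sum_nonneg)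

lemma mpow_Suc_left_sum:
  "(\<Sum>y\<in>UNIV. mpow P (Suc n) x y * g y) = (\<Sum>w\<in>UNIV. mpow P n x w * (\<Sum>y\<in>UNIV. P w y * g y))"
  by (simp add: sum_distrib_right) (subst sum.swap, simp add: sum_distrib_left mult.assoc)

lemma mpow_eigenfunction:
  assumes "\<And>x. (\<Sum>y\<in>UNIV. P x y * g y) = l * g x"
  shows "(\<Sum>y\<in>UNIV. mpow P n x y * g y) = l ^ n * g x"
proof (induction n arbitrary: x)
  case 0
  have "(\<Sum>y\<in>UNIV. mpow P 0 x y * g y) = (\<Sum>y\<in>UNIV. if x = y then g y else 0)"
    by (rule sum.cong) auto
  then show ?case by simp
next
  case (Suc n)
  have "(\<Sum>y\<in>UNIV. mpow P (Suc n) x y * g y) = (\<Sum>w\<in>UNIV. mpow P n x w * (\<Sum>y\<in>UNIV. P w y * g y))"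
    by (rule mpow_Suc_left_sum)
  also have "\<dots> = (\<Sum>w\<in>UNIV. mpow P n x w * g w * l)"
    using assms by (simp add: mult_ac)
  also have "\<dots> = (\<Sum>w\<in>UNIV. mpow P n x w * g w) * l"
    by (simp add: sum_distrib_right)
  also have "\<dots> = l ^ Suc n * g x"
    using Suc by simp
  finally show ?case .
qed

lemma stationary_mpow:
  assumes "stationary P \<pi>"
  shows "(\<Sum>x\<in>UNIV. \<pi> x * mpow P n x y) = \<pi> y"
proof (induction n arbitrary: y)
  case 0
  have "(\<Sum>x\<in>UNIV. \<pi> x * mpow P 0 x y) = (\<Sum>x\<in>UNIV. if x = y then \<pi> x else 0)"
    by (rule sum.cong) auto
  then show ?case by simp
next
  case (Suc n)
  have "(\<Sum>x\<in>UNIV. \<pi> x * mpow P (Suc n) x y) = (\<Sum>x\<in>UNIV. \<Sum>w\<in>UNIV. \<pi> x * mpow P n x w * P w y)"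
    by (simp add: sum_distrib_left mult.assoc)
  also have "\<dots> = (\<Sum>w\<in>UNIV. (\<Sum>x\<in>UNIV. \<pi> x * mpow P n x w) * P w y)"
    by (subst sum.swap) (simp add: sum_distrib_right)
  also have "\<dots> = (\<Sum>w\<in>UNIV. \<pi> w * P w y)"
    using Suc by simp
  also have "\<dots> = \<pi> y"
    using assms unfolding stationary_def by metis
  finally show ?case .
qed

lemma stationary_pos:
  assumes "stochastic P" and "irreducible P" and stat: "stationary P \<pi>"
  shows "\<pi> y > 0"
proof -
  have nonneg: "\<pi> x \<ge> 0" for x
    using stat unfolding stationary_def by blast
  have "\<exists>x0. \<pi> x0 > 0"
  proof (rule ccontr)
    assume "\<nexists>x0. \<pi> x0 > 0"
    then have "(\<Sum>x\<in>UNIV. \<pi> x) \<le> 0"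
      by (simp add: sum_nonpos not_less)
    then show False
      using stat unfolding stationary_def by linarith
  qed
  then obtain x0 where x0: "\<pi> x0 > 0" ..
  obtain n where n: "mpow P n x0 y > 0"
    using assms(2) by (auto simp: irreducible_def)
  have "0 < \<pi> x0 * mpow P n x0 y"
    using x0 n by simp
  also have "\<dots> \<le> (\<Sum>x\<in>UNIV. \<pi> x * mpow P n x y)"
    by (rule member_le_sum) (auto intro!: mult_nonneg_nonneg nonneg mpow_nonneg[OF assms(1)])
  finally show ?thesis
    using stationary_mpow[OF stat] by simp
qed

locale pi_orthonormal_eigenbasis =
  fixes P :: "'x::finite \<Rightarrow> 'x \<Rightarrow> real" and \<pi> :: "'x \<Rightarrow> real"
    and lam :: "nat \<Rightarrow> real" and f :: "nat \<Rightarrow> 'x \<Rightarrow> real"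
  assumes \<pi>_pos: "\<And>x. \<pi> x > 0"
    and lam1: "lam 1 = 1" and f1: "f 1 = (\<lambda>_. 1)"
    and eigen: "\<And>j x. 1 \<le> j \<Longrightarrow> j \<le> CARD('x) \<Longrightarrow> (\<Sum>y\<in>UNIV. P x y * f j y) = lam j * f j x"
    and orthonormal: "\<And>i j. 1 \<le> i \<Longrightarrow> i \<le> CARD('x) \<Longrightarrow> 1 \<le> j \<Longrightarrow> j \<le> CARD('x) \<Longrightarrow>
          (\<Sum>x\<in>UNIV. \<pi> x * f i x * f j x) = (if i = j then 1 else 0)"
begin

definition centered_kernel :: "nat \<Rightarrow> 'x \<Rightarrow> 'x \<Rightarrow> real" where
  "centered_kernel L x y = (\<Sum>j=2..CARD('x). lam j ^ L * f j x * f j y)"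

lemma mpow_eq_centered_kernel: "mpow P L x y = \<pi> y * (1 + centered_kernel L x y)"
proof -
  define g where "g y = mpow P L x y / \<pi> y" for y
  have "g y = (\<Sum>j=1..CARD('x). (\<Sum>y'\<in>UNIV. \<pi> y' * g y' * f j y') * f j y)"
    by (rule orthonormal_expansion[OF \<pi>_pos]) (simp_all add: orthonormal)
  also have "\<dots> = (\<Sum>j=1..CARD('x). lam j ^ L * f j x * f j y)"
  proof (rule sum.cong[OF refl])
    fix j assume j: "j \<in> {1..CARD('x)}"
    have "(\<Sum>y'\<in>UNIV. \<pi> y' * g y' * f j y') = (\<Sum>y'\<in>UNIV. mpow P L x y' * f j y')"
      unfolding g_def using \<pi>_pos by (intro sum.cong refl) (simp add: less_imp_neq[symmetric])
    also have "\<dots> = lam j ^ L * f j x"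
      by (rule mpow_eigenfunction) (use eigen j in auto)
    finally show "(\<Sum>y'\<in>UNIV. \<pi> y' * g y' * f j y') * f j y = lam j ^ L * f j x * f j y"
      by simp
  qed
  also have "\<dots> = 1 + centered_kernel L x y"
    unfolding centered_kernel_def
    by (subst sum.atLeast_Suc_atMost) (simp_all add: Suc_le_eq numeral_2_eq_2 lam1[unfolded One_nat_def] f1[unfolded One_nat_def])
  finally show ?thesis
    unfolding g_def using \<pi>_pos[of y] by (simp add: divide_eq_eq mult.commute)
qed

lemma sum_centered_kernel: "(\<Sum>y\<in>UNIV. \<pi> y * centered_kernel L x y) = 0"
proof -
  have "(\<Sum>y\<in>UNIV. \<pi> y * centered_kernel L x y)
      = (\<Sum>j=2..CARD('x). lam j ^ L * f j x * (\<Sum>y\<in>UNIV. \<pi> y * f 1 y * f j y))"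
    unfolding centered_kernel_def f1
    by (simp add: sum_distrib_left mult_ac) (rule sum.swap)
  also have "\<dots> = 0"
    using orthonormal by (intro sum.neutral) auto
  finally show ?thesis .
qed

lemma sum_sq_centered_kernel:
  "(\<Sum>y\<in>UNIV. \<pi> y * (centered_kernel L x y)\<^sup>2) = (\<Sum>j=2..CARD('x). lam j ^ (2 * L) * (f j x)\<^sup>2)"
proof -
  have "(\<Sum>y\<in>UNIV. \<pi> y * (centered_kernel L x y)\<^sup>2) = (\<Sum>j=2..CARD('x). (lam j ^ L * f j x)\<^sup>2)"
    unfolding centered_kernel_def using orthonormal by (intro sum_sq_orthonormal) auto
  then show ?thesis
    by (simp add: power_mult_distrib power_mult[symmetric] mult.commute)
qed

lemma sum_sq_eigenfunctions: "(\<Sum>j=2..CARD('x). (f j x)\<^sup>2) = 1 / \<pi> x - 1"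
proof -
  have "1 = \<pi> x * (1 + (\<Sum>j=2..CARD('x). (f j x)\<^sup>2))"
    using mpow_eq_centered_kernel[of 0 x x] by (simp add: centered_kernel_def power2_eq_square)
  then show ?thesis
    using \<pi>_pos[of x] by (simp add: field_simps)
qed

lemma sqrt_sum_sq_centered_kernel_le:
  "sqrt (\<Sum>j=2..CARD('x). lam j ^ (2 * L) * (f j x)\<^sup>2)
    \<le> Max {\<bar>lam j\<bar> | j. 2 \<le> j \<and> j \<le> CARD('x)} ^ L * sqrt (1 / \<pi> x - 1)"
proof (cases "CARD('x) < 2")
  case True
  then show ?thesis
    using sum_sq_eigenfunctions[of x] by simp
next
  case False
  define lamstar where "lamstar = Max {\<bar>lam j\<bar> | j. 2 \<le> j \<and> j \<le> CARD('x)}"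
  have lam_le: "\<bar>lam j\<bar> \<le> lamstar" if "j \<in> {2..CARD('x)}" for j
    unfolding lamstar_def using that by (intro Max_ge) auto
  have "lamstar \<ge> 0"
    using lam_le[of 2] False by simp
  have "(\<Sum>j=2..CARD('x). lam j ^ (2 * L) * (f j x)\<^sup>2) \<le> (\<Sum>j=2..CARD('x). (lamstar ^ L)\<^sup>2 * (f j x)\<^sup>2)"
  proof (rule sum_mono)
    fix j assume "j \<in> {2..CARD('x)}"
    then have "\<bar>lam j\<bar> ^ L \<le> lamstar ^ L"
      using lam_le by (simp add: power_mono)
    then have "(lam j ^ L)\<^sup>2 \<le> (lamstar ^ L)\<^sup>2"
      by (metis abs_ge_zero power_abs power2_abs power_mono)
    moreover have "lam j ^ (2 * L) = (lam j ^ L)\<^sup>2"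
      by (simp add: power_mult[symmetric] mult.commute)
    ultimately show "lam j ^ (2 * L) * (f j x)\<^sup>2 \<le> (lamstar ^ L)\<^sup>2 * (f j x)\<^sup>2"
      by (simp add: mult_right_mono)
  qed
  also have "\<dots> = (lamstar ^ L)\<^sup>2 * (1 / \<pi> x - 1)"
    by (simp add: sum_sq_eigenfunctions flip: sum_distrib_left)
  finally have "sqrt (\<Sum>j=2..CARD('x). lam j ^ (2 * L) * (f j x)\<^sup>2) \<le> sqrt ((lamstar ^ L)\<^sup>2 * (1 / \<pi> x - 1))"
    by (rule real_sqrt_le_mono)
  also have "\<dots> = lamstar ^ L * sqrt (1 / \<pi> x - 1)"
    using \<open>lamstar \<ge> 0\<close> by (simp add: real_sqrt_mult)
  finally show ?thesis
    unfolding lamstar_def .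
qed

end

section \<open>The Markov-modulated process\<close>

lemma (in prob_space) measure_eq_mult_by_slices:
  fixes Y :: "'a \<Rightarrow> 'c::countable"
  assumes Y: "Y \<in> measurable M (count_space UNIV)" and sets: "A \<in> sets M" "B \<in> sets M"
    and slices: "\<And>w. measure M (A \<inter> {\<omega>\<in>space M. Y \<omega> = w}) = measure M (B \<inter> {\<omega>\<in>space M. Y \<omega> = w}) * p"
    and "p \<ge> 0"
  shows "measure M A = measure M B * p"
proof -
  have split: "emeasure M C = (\<integral>\<^sup>+w. emeasure M (C \<inter> {\<omega>\<in>space M. Y \<omega> = w}) \<partial>count_space UNIV)"
    if "C \<in> sets M" for C
  proof -
    have "C = (\<Union>w. C \<inter> {\<omega>\<in>space M. Y \<omega> = w})"
      using sets.sets_into_space[OF that] by auto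
    moreover have "C \<inter> {\<omega>\<in>space M. Y \<omega> = w} \<in> sets M" for w
      using that Y by measurable
    ultimately show ?thesis
      by (subst emeasure_UN_countable[symmetric]) (auto simp: disjoint_family_on_def)
  qed
  have "emeasure M A = (\<integral>\<^sup>+w. emeasure M (B \<inter> {\<omega>\<in>space M. Y \<omega> = w}) * ennreal p \<partial>count_space UNIV)"
    using split[OF sets(1)] slices \<open>p \<ge> 0\<close>
    by (simp add: emeasure_eq_measure ennreal_mult)
  also have "\<dots> = emeasure M B * ennreal p"
    using split[OF sets(2)] by (simp add: nn_integral_multc)
  finally show ?thesis
    using \<open>p \<ge> 0\<close> by (simp add: emeasure_eq_measure ennreal_mult'[symmetric])
qed

locale markov_modulated_process =
  fixes M :: "'a measure" and P :: "'x::finite \<Rightarrow> 'x \<Rightarrow> real" and \<pi> :: "'x \<Rightarrow> real"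
    and r :: "'x \<Rightarrow> 'z::countable pmf" and X :: "nat \<Rightarrow> 'a \<Rightarrow> 'x" and Z :: "nat \<Rightarrow> 'a \<Rightarrow> 'z"
  assumes model: "markov_modulated M P \<pi> r X Z"
begin

sublocale prob_space M
  using model by (simp add: markov_modulated_def)

lemma measurable_X [measurable]: "X n \<in> measurable M (count_space UNIV)"
  and measurable_Z [measurable]: "Z n \<in> measurable M (count_space UNIV)"
  using model by (simp_all add: markov_modulated_def)

lemma measure_paths_eq_sum:
  assumes "{\<omega>\<in>space M. Q \<omega>} \<in> sets M"
  shows "measure M {\<omega>\<in>space M. (\<forall>i\<le>m. X i \<omega> \<in> c i) \<and> Q \<omega>}
       = (\<Sum>xs\<in>PiE {..m} c. measure M {\<omega>\<in>space M. (\<forall>i\<le>m. X i \<omega> = xs i) \<and> Q \<omega>})"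
proof -
  define A where "A xs = {\<omega>\<in>space M. (\<forall>i\<le>m. X i \<omega> = xs i) \<and> Q \<omega>}" for xs
  have union: "{\<omega>\<in>space M. (\<forall>i\<le>m. X i \<omega> \<in> c i) \<and> Q \<omega>} = (\<Union>xs\<in>PiE {..m} c. A xs)"
  proof (intro equalityI subsetI)
    fix \<omega> assume \<omega>: "\<omega> \<in> {\<omega>\<in>space M. (\<forall>i\<le>m. X i \<omega> \<in> c i) \<and> Q \<omega>}"
    then have "restrict (\<lambda>i. X i \<omega>) {..m} \<in> PiE {..m} c" and "\<omega> \<in> A (restrict (\<lambda>i. X i \<omega>) {..m})"
      by (auto simp: A_def)
    then show "\<omega> \<in> (\<Union>xs\<in>PiE {..m} c. A xs)" by blast
  qed (auto simp: A_def PiE_def Pi_def)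
  have "A ` PiE {..m} c \<subseteq> sets M"
  proof -
    have "A xs = {\<omega>\<in>space M. \<forall>i\<le>m. X i \<omega> = xs i} \<inter> {\<omega>\<in>space M. Q \<omega>}" for xs
      unfolding A_def by auto
    moreover have "{\<omega>\<in>space M. \<forall>i\<le>m. X i \<omega> = xs i} \<in> sets M" for xs
      by measurable
    ultimately show ?thesis using assms by auto
  qed
  moreover have "disjoint_family_on A (PiE {..m} c)"
    unfolding disjoint_family_on_def A_def by auto (metis PiE_ext atMost_iff)
  ultimately show ?thesis
    unfolding union by (subst measure_finite_Union) (auto simp: finite_PiE A_def)
qed

lemma measure_path_X_last:
  "measure M {\<omega>\<in>space M. (\<forall>i\<le>m. X i \<omega> = xs i) \<and> X m \<omega> = w}
    = (if xs m = w then measure M {\<omega>\<in>space M. \<forall>i\<le>m. X i \<omega> = xs i} else 0)"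
proof (cases "xs m = w")
  case True
  then have "{\<omega>\<in>space M. (\<forall>i\<le>m. X i \<omega> = xs i) \<and> X m \<omega> = w} = {\<omega>\<in>space M. \<forall>i\<le>m. X i \<omega> = xs i}"
    by auto
  with True show ?thesis
    by simp
next
  case False
  then have "{\<omega>\<in>space M. (\<forall>i\<le>m. X i \<omega> = xs i) \<and> X m \<omega> = w} = {}"
    by auto
  with False show ?thesis
    by (metis measure_empty)
qed

lemma measure_paths_factor_last:
  assumes "{\<omega>\<in>space M. Q \<omega>} \<in> sets M"
    and factor: "\<And>xs. measure M {\<omega>\<in>space M. (\<forall>i\<le>m. X i \<omega> = xs i) \<and> Q \<omega>}
       = measure M {\<omega>\<in>space M. \<forall>i\<le>m. X i \<omega> = xs i} * g (xs m)"
  shows "measure M {\<omega>\<in>space M. (\<forall>i\<le>m. X i \<omega> \<in> c i) \<and> Q \<omega>}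
       = (\<Sum>w\<in>UNIV. measure M {\<omega>\<in>space M. (\<forall>i\<le>m. X i \<omega> \<in> c i) \<and> X m \<omega> = w} * g w)"
proof -
  define PE where "PE = PiE {..m} c"
  define pm where "pm xs = measure M {\<omega>\<in>space M. \<forall>i\<le>m. X i \<omega> = xs i}" for xs
  have finite: "finite PE"
    unfolding PE_def by (simp add: finite_PiE)
  have marginal: "measure M {\<omega>\<in>space M. (\<forall>i\<le>m. X i \<omega> \<in> c i) \<and> X m \<omega> = w}
      = (\<Sum>xs\<in>{xs\<in>PE. xs m = w}. pm xs)" for w
  proof -
    have "measure M {\<omega>\<in>space M. (\<forall>i\<le>m. X i \<omega> \<in> c i) \<and> X m \<omega> = w}
        = (\<Sum>xs\<in>PE. measure M {\<omega>\<in>space M. (\<forall>i\<le>m. X i \<omega> = xs i) \<and> X m \<omega> = w})"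
      unfolding PE_def by (rule measure_paths_eq_sum) measurable
    also have "\<dots> = (\<Sum>xs\<in>PE. if xs m = w then pm xs else 0)"
      by (simp only: measure_path_X_last pm_def)
    also have "\<dots> = (\<Sum>xs\<in>{xs\<in>PE. xs m = w}. pm xs)"
      using finite by (simp add: sum.inter_filter)
    finally show ?thesis .
  qed
  have "measure M {\<omega>\<in>space M. (\<forall>i\<le>m. X i \<omega> \<in> c i) \<and> Q \<omega>} = (\<Sum>xs\<in>PE. pm xs * g (xs m))"
    unfolding PE_def pm_def by (simp add: measure_paths_eq_sum[OF assms(1)] factor)
  also have "\<dots> = (\<Sum>w\<in>UNIV. \<Sum>xs\<in>{xs\<in>PE. xs m = w}. pm xs * g (xs m))"
    using finite by (rule sum.group[symmetric]) auto
  also have "\<dots> = (\<Sum>w\<in>UNIV. measure M {\<omega>\<in>space M. (\<forall>i\<le>m. X i \<omega> \<in> c i) \<and> X m \<omega> = w} * g w)"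
    by (simp add: marginal sum_distrib_right)
  finally show ?thesis .
qed

lemma measure_path_transition:
  "measure M {\<omega>\<in>space M. (\<forall>i\<le>n. X i \<omega> = xs i) \<and> X (Suc n) \<omega> = y}
   = measure M {\<omega>\<in>space M. \<forall>i\<le>n. X i \<omega> = xs i} * P (xs n) y"
proof -
  have "{\<omega>\<in>space M. (\<forall>i\<le>n. X i \<omega> = xs i) \<and> X (Suc n) \<omega> = y}
      = {\<omega>\<in>space M. \<forall>i\<le>Suc n. X i \<omega> = (xs(Suc n := y)) i}"
    by (auto simp: le_Suc_eq)
  moreover have "{\<omega>\<in>space M. \<forall>i\<le>n. X i \<omega> = xs i} = {\<omega>\<in>space M. \<forall>i\<le>n. X i \<omega> = (xs(Suc n := y)) i}"
    by auto
  ultimately show ?thesis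
    using model unfolding markov_modulated_def by simp
qed

text \<open>Summing out the earlier observations \<open>Z 0, \<dots>, Z (m - 1)\<close> one at a time, from the last down.\<close>
lemma measure_path_emission:
  "measure M {\<omega>\<in>space M. (\<forall>i\<le>m. X i \<omega> = xs i) \<and> Z m \<omega> = z}
   = measure M {\<omega>\<in>space M. \<forall>i\<le>m. X i \<omega> = xs i} * pmf (r (xs m)) z"
proof -
  define E where "E k zs = {\<omega>\<in>space M. (\<forall>i\<le>m. X i \<omega> = xs i) \<and> (\<forall>i<k. Z i \<omega> = zs i)}" for k zs
  define Zm where "Zm = {\<omega>\<in>space M. Z m \<omega> = z}"
  have "\<forall>zs. measure M (E k zs \<inter> Zm) = measure M (E k zs) * pmf (r (xs m)) z" if "k \<le> m" for k
    using that
  proof (induction k rule: inc_induct)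
    case base
    have "E m zs \<inter> Zm = {\<omega>\<in>space M. (\<forall>i\<le>m. X i \<omega> = xs i) \<and> (\<forall>i<m. Z i \<omega> = zs i) \<and> Z m \<omega> = z}" for zs
      unfolding E_def Zm_def by auto
    then show ?case
      using model unfolding markov_modulated_def E_def by simp
  next
    case (step k)
    show ?case
    proof
      fix zs
      have slice: "E k zs \<inter> {\<omega>\<in>space M. Z k \<omega> = w} = E (Suc k) (zs(k := w))" for w
        unfolding E_def by (auto simp: less_Suc_eq)
      show "measure M (E k zs \<inter> Zm) = measure M (E k zs) * pmf (r (xs m)) z"
      proof (rule measure_eq_mult_by_slices[OF measurable_Z])
        show "E k zs \<inter> Zm \<in> sets M" "E k zs \<in> sets M"
          unfolding E_def Zm_def by measurable
        show "measure M (E k zs \<inter> Zm \<inter> {\<omega>\<in>space M. Z k \<omega> = w})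
            = measure M (E k zs \<inter> {\<omega>\<in>space M. Z k \<omega> = w}) * pmf (r (xs m)) z" for w
        proof -
          have "E k zs \<inter> Zm \<inter> {\<omega>\<in>space M. Z k \<omega> = w} = E (Suc k) (zs(k := w)) \<inter> Zm"
            using slice[of w] by blast
          moreover have "measure M (E (Suc k) (zs(k := w)) \<inter> Zm) = measure M (E (Suc k) (zs(k := w))) * pmf (r (xs m)) z"
            using step.IH by blast
          ultimately show ?thesis
            by (simp only: slice)
        qed
      qed simp
    qed
  qed
  then have "measure M (E 0 zs \<inter> Zm) = measure M (E 0 zs) * pmf (r (xs m)) z" for zs
    by simp
  moreover have "E 0 zs \<inter> Zm = {\<omega>\<in>space M. (\<forall>i\<le>m. X i \<omega> = xs i) \<and> Z m \<omega> = z}" for zs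
    unfolding E_def Zm_def by auto
  ultimately show ?thesis
    unfolding E_def by simp
qed

lemma measure_paths_X_Suc:
  "measure M {\<omega>\<in>space M. (\<forall>i\<le>n. X i \<omega> \<in> c i) \<and> X (Suc n) \<omega> = y}
   = (\<Sum>w\<in>UNIV. measure M {\<omega>\<in>space M. (\<forall>i\<le>n. X i \<omega> \<in> c i) \<and> X n \<omega> = w} * P w y)"
  by (rule measure_paths_factor_last) (measurable, rule measure_path_transition)

lemma measure_paths_Z:
  "measure M {\<omega>\<in>space M. (\<forall>i\<le>m. X i \<omega> \<in> c i) \<and> Z m \<omega> = z}
   = (\<Sum>w\<in>UNIV. measure M {\<omega>\<in>space M. (\<forall>i\<le>m. X i \<omega> \<in> c i) \<and> X m \<omega> = w} * pmf (r w) z)"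
  by (rule measure_paths_factor_last) (measurable, rule measure_path_emission)

context
  assumes stat: "stationary P \<pi>"
begin

lemma measure_X_eq: "measure M {\<omega>\<in>space M. X n \<omega> = x} = \<pi> x"
proof (induction n arbitrary: x)
  case 0
  then show ?case
    using model by (simp add: markov_modulated_def)
next
  case (Suc n)
  have "measure M {\<omega>\<in>space M. X (Suc n) \<omega> = x}
     = measure M {\<omega>\<in>space M. (\<forall>i\<le>n. X i \<omega> \<in> UNIV) \<and> X (Suc n) \<omega> = x}"
    by simp
  also have "\<dots> = (\<Sum>w\<in>UNIV. \<pi> w * P w x)"
    unfolding measure_paths_X_Suc using Suc by simp
  also have "\<dots> = \<pi> x"
    using stat unfolding stationary_def by metis
  finally show ?case .
qed

lemma measure_X_Z_eq:
  "measure M {\<omega>\<in>space M. X n \<omega> = x \<and> Z (n + L) \<omega> = z} = \<pi> x * (\<Sum>w\<in>UNIV. mpow P L x w * pmf (r w) z)"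
proof -
  define c where "c i = (if i = n then {x} else UNIV)" for i
  have fix_X_n: "{\<omega>\<in>space M. X n \<omega> = x \<and> Q \<omega>} = {\<omega>\<in>space M. (\<forall>i\<le>m. X i \<omega> \<in> c i) \<and> Q \<omega>}"
    if "n \<le> m" for Q m
    using that unfolding c_def by auto
  have X_X: "measure M {\<omega>\<in>space M. X n \<omega> = x \<and> X (n + k) \<omega> = y} = \<pi> x * mpow P k x y" for k y
  proof (induction k arbitrary: y)
    case 0
    have "{\<omega>\<in>space M. X n \<omega> = x \<and> X n \<omega> = y} = (if x = y then {\<omega>\<in>space M. X n \<omega> = x} else {})"
      by auto
    then show ?case
      by (simp add: measure_X_eq)
  next
    case (Suc k)
    have "measure M {\<omega>\<in>space M. X n \<omega> = x \<and> X (Suc (n + k)) \<omega> = y}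
        = (\<Sum>w\<in>UNIV. measure M {\<omega>\<in>space M. X n \<omega> = x \<and> X (n + k) \<omega> = w} * P w y)"
      by (simp only: fix_X_n[of "n + k"] le_add1 measure_paths_X_Suc)
    then show ?case
      by (simp add: Suc sum_distrib_left mult.assoc)
  qed
  show ?thesis
    by (simp only: fix_X_n[of "n + L"] le_add1 measure_paths_Z)
      (simp add: fix_X_n[symmetric] X_X sum_distrib_left mult.assoc)
qed

lemma measure_Z_eq: "measure M {\<omega>\<in>space M. Z m \<omega> = z} = (\<Sum>w\<in>UNIV. \<pi> w * pmf (r w) z)"
proof -
  have "measure M {\<omega>\<in>space M. Z m \<omega> = z} = measure M {\<omega>\<in>space M. (\<forall>i\<le>m. X i \<omega> \<in> UNIV) \<and> Z m \<omega> = z}"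
    by simp
  also have "\<dots> = (\<Sum>w\<in>UNIV. \<pi> w * pmf (r w) z)"
    unfolding measure_paths_Z by (simp add: measure_X_eq)
  finally show ?thesis .
qed

lemma predictability_eq:
  assumes "\<pi> x > 0"
  shows "predictability M X Z n L x = 1/2 * (\<Sum>\<^sub>\<infinity>z. \<bar>\<Sum>w\<in>UNIV. (mpow P L x w - \<pi> w) * pmf (r w) z\<bar>)"
  using assms
  by (simp add: predictability_def measure_X_Z_eq measure_X_eq measure_Z_eq left_diff_distrib sum_subtractf)

end

end

locale spectral_markov_modulated_process =
  markov_modulated_process M P \<pi> r X Z + pi_orthonormal_eigenbasis P \<pi> lam f
  for M :: "'a measure" and P :: "'x::finite \<Rightarrow> 'x \<Rightarrow> real" and \<pi> r X Z lam f +
  assumes stationary: "stationary P \<pi>"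
begin

lemma sum_\<pi>_eq_1: "(\<Sum>y\<in>UNIV. \<pi> y) = 1"
  using stationary unfolding stationary_def by blast

lemma predictability_le:
  "predictability M X Z n L x
    \<le> 1/2 * sqrt (\<Sum>j=2..CARD('x). lam j ^ (2 * L) * (f j x)\<^sup>2) * sqrt (chi2_ratio \<pi> r - 1)"
proof -
  have "mpow P L x w - \<pi> w = \<pi> w * centered_kernel L x w" for w
    by (simp add: mpow_eq_centered_kernel algebra_simps)
  then have "predictability M X Z n L x
      = 1/2 * (\<Sum>\<^sub>\<infinity>z. \<bar>\<Sum>w\<in>UNIV. \<pi> w * centered_kernel L x w * pmf (r w) z\<bar>)"
    by (simp only: predictability_eq[OF stationary \<pi>_pos])
  also have "\<dots> \<le> 1/2 * (sqrt (\<Sum>y\<in>UNIV. \<pi> y * (centered_kernel L x y)\<^sup>2) * sqrt (chi2_ratio \<pi> r - 1))"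
    using infsum_abs_centered_mixture_le[OF \<pi>_pos sum_\<pi>_eq_1 sum_centered_kernel] by simp
  finally show ?thesis
    by (simp add: sum_sq_centered_kernel)
qed

lemma predictability_le_Max:
  "predictability M X Z n L x
    \<le> 1/2 * Max {\<bar>lam j\<bar> | j. 2 \<le> j \<and> j \<le> CARD('x)} ^ L * sqrt (1 / \<pi> x - 1) * sqrt (chi2_ratio \<pi> r - 1)"
proof -
  have "0 \<le> sqrt (chi2_ratio \<pi> r - 1)"
    using one_le_chi2_ratio[OF \<pi>_pos sum_\<pi>_eq_1] by simp
  have "predictability M X Z n L x
      \<le> 1/2 * sqrt (\<Sum>j=2..CARD('x). lam j ^ (2 * L) * (f j x)\<^sup>2) * sqrt (chi2_ratio \<pi> r - 1)"
    by (rule predictability_le)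
  also have "\<dots> \<le> 1/2 * (Max {\<bar>lam j\<bar> | j. 2 \<le> j \<and> j \<le> CARD('x)} ^ L * sqrt (1 / \<pi> x - 1))
      * sqrt (chi2_ratio \<pi> r - 1)"
    using sqrt_sum_sq_centered_kernel_le \<open>0 \<le> sqrt (chi2_ratio \<pi> r - 1)\<close>
    by (intro mult_right_mono mult_left_mono) auto
  finally show ?thesis
    by (simp only: mult.assoc)
qed

end

theorem theorem2:
  fixes M :: "'a measure" and P :: "'x::finite \<Rightarrow> 'x \<Rightarrow> real" and \<pi> :: "'x \<Rightarrow> real"
    and r :: "'x \<Rightarrow> 'z::countable pmf" and X :: "nat \<Rightarrow> 'a \<Rightarrow> 'x" and Z :: "nat \<Rightarrow> 'a \<Rightarrow> 'z"
    and lam :: "nat \<Rightarrow> real" and f :: "nat \<Rightarrow> 'x \<Rightarrow> real"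
  defines "K \<equiv> CARD('x)"
  defines "lamstar \<equiv> Max {\<bar>lam j\<bar> | j. 2 \<le> j \<and> j \<le> K}"
  defines "R \<equiv> (\<Sum>\<^sub>\<infinity>z\<in>{z. (\<Sum>y\<in>UNIV. \<pi> y * pmf (r y) z) > 0}.
                  (\<Sum>y\<in>UNIV. \<pi> y * (pmf (r y) z)\<^sup>2) / (\<Sum>y\<in>UNIV. \<pi> y * pmf (r y) z))"
  assumes stoch: "stochastic P"
    and irred: "irreducible P"
    and aper: "aperiodic P"
    and stat: "stationary P \<pi>"
    and rev: "reversible P \<pi>"
    and model: "markov_modulated M P \<pi> r X Z"
    and lam1: "lam 1 = 1" and f1: "f 1 = (\<lambda>_. 1)"
    and lam_sorted: "\<And>i j. 1 \<le> i \<Longrightarrow> i \<le> j \<Longrightarrow> j \<le> K \<Longrightarrow> lam j \<le> lam i"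
    and lamK: "lam K > -1"
    and eigen: "\<And>j x. 1 \<le> j \<Longrightarrow> j \<le> K \<Longrightarrow> (\<Sum>y\<in>UNIV. P x y * f j y) = lam j * f j x"
    and orthonormal: "\<And>i j. 1 \<le> i \<Longrightarrow> i \<le> K \<Longrightarrow> 1 \<le> j \<Longrightarrow> j \<le> K \<Longrightarrow>
          (\<Sum>x\<in>UNIV. \<pi> x * f i x * f j x) = (if i = j then 1 else 0)"
  shows "1 \<le> R \<and> R \<le> real K
    \<and> (\<forall>x n L. predictability M X Z n L x
          \<le> 1/2 * sqrt (\<Sum>j=2..K. lam j ^ (2*L) * (f j x)\<^sup>2) * sqrt 2 * sqrt (R - 1))
    \<and> (\<forall>x n L. predictability M X Z n L x
          \<le> 1/2 * lamstar ^ L * sqrt (1 / \<pi> x - 1) * sqrt 2 * sqrt (R - 1))"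
proof -
  txt \<open>Nor is the factor
    \<open>sqrt 2\<close>, which is only added at the end.\<close>
  have \<pi>_pos: "\<And>y. \<pi> y > 0"
    by (rule stationary_pos[OF stoch irred stat])
  interpret spectral_markov_modulated_process M P \<pi> r X Z lam f
    using model \<pi>_pos lam1 f1 eigen orthonormal stat unfolding K_def
    by (intro spectral_markov_modulated_process.intro markov_modulated_process.intro
        pi_orthonormal_eigenbasis.intro spectral_markov_modulated_process_axioms.intro)
  have R_eq: "R = chi2_ratio \<pi> r"
    unfolding R_def chi2_ratio_def mixture_mass_def mixture_second_moment_def ..
  have R_ge: "1 \<le> R" and R_le: "R \<le> real K"
    unfolding R_eq K_def using one_le_chi2_ratio chi2_ratio_le_card \<pi>_pos sum_\<pi>_eq_1 by auto
  have sqrt2: "a * sqrt (R - 1) \<le> a * sqrt 2 * sqrt (R - 1)" if "0 \<le> a" for a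
  proof -
    have "a * 1 \<le> a * sqrt 2"
      using that by (intro mult_left_mono) auto
    then show ?thesis
      using R_ge by (intro mult_right_mono) auto
  qed
  show ?thesis
  proof (intro conjI allI)
    fix x n L
    have S_nonneg: "0 \<le> sqrt (\<Sum>j=2..K. lam j ^ (2*L) * (f j x)\<^sup>2)"
      by (auto intro!: sum_nonneg simp: power_mult)
    show "predictability M X Z n L x
        \<le> 1/2 * sqrt (\<Sum>j=2..K. lam j ^ (2*L) * (f j x)\<^sup>2) * sqrt 2 * sqrt (R - 1)"
      by (rule order_trans[OF predictability_le[of n L x, folded R_eq K_def] sqrt2])
        (use S_nonneg in simp)
    have Max_nonneg: "0 \<le> lamstar ^ L * sqrt (1 / \<pi> x - 1)"
      using S_nonneg sqrt_sum_sq_centered_kernel_le[of L x, folded K_def, folded lamstar_def]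
      by (rule order_trans)
    show "predictability M X Z n L x \<le> 1/2 * lamstar ^ L * sqrt (1 / \<pi> x - 1) * sqrt 2 * sqrt (R - 1)"
      by (rule order_trans[OF predictability_le_Max[of n L x, folded R_eq K_def, folded lamstar_def] sqrt2])
        (use Max_nonneg in simp)
  qed (fact R_ge R_le)+
qed

end
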